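(* Let $\mathcal{Y}_c$ and $\mathcal{X}$ be the supports of an endogenous covariate $Y_c$ and an exogenous covariate vector $X$, with joint distribution $P_{Y_c,X}$ and marginal $P_X$. Consider the structural model $Y_o=\Lambda\big(f_{\theta_0}(Y_c,X)+\varepsilon\big)$ with $\mathbb{E}[\varepsilon\mid X]=0$, where $\Lambda$ is a known linear map and $\{f_\theta:\theta\in\Theta\}$ is a known family of real-valued functions on $\mathcal{Y}_c\times\mathcal{X}$. Let $\mathcal{F}$ be an eligible set of real-valued functions on $\mathcal{Y}_c\times\mathcal{X}$ (square-integrable under $P_{Y_c,X}$), and define \[ \mathcal{F}_\Theta:=\big\{(y_c,x)\mapsto f_\theta(y_c,x)+f(y_c,x)-\mathbb{E}[f(Y_c,X)\mid X=x]\ :\ \theta\in\Theta,\ f\in\mathcal{F}\big\}\subseteq\mathcal{F}. \] Suppose $\mathcal{F}_\Theta$ and $\mathcal{F}$ are linear spaces and let $d$ be the mean-squared distance on $\mathcal{F}$, $d(f,g)=\mathbb{E}_{P_{Y_c,X}}\big[(f(Y_c,X)-g(Y_c,X))^2\big]$, with $d(\mathcal{F}_\Theta,g):=\inf_{f\in\mathcal{F}_\Theta}d(f,g)$. Then for every $g\in\mathcal{F}$, \[ d(\mathcal{F}_\Theta,g)=\inf_{\theta\in\Theta}\overline{d}(\overline{f}_\theta,\overline{g}), \] where $\overline{f}_\theta(x):=\mathbb{E}[f_\theta(Y_c,X)\mid X=x]$, $\overline{g}(x):=\mathbb{E}[g(Y_c,X)\mid X=x]$, and $\overline{d}(\ov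erline{f},\overline{g}):=\mathbb{E}_{P_X}\big[(\overline{f}(X)-\overline{g}(X))^2\big]$.
   Context: Conditional expectations are with respect to the joint distribution of $(Y_c,X)$. The set $\mathcal{F}_\Theta$ represents all mappings consistent with the model (the nonparametric part $f-\mathbb{E}[f\mid X]$ encodes an unrestricted error satisfying only the conditional mean-zero restriction). *)

theory Defs
  imports "HOL-Probability.Probability"
begin

text \<open>The joint law P of (Y_c, X) is a probability measure M on the product
  space Myc \<Otimes> Mx; X is the second projection. The conditional expectation
  E[h(Y_c,X) | X] is the Radon-Nikodym conditional expectation of h with
  respect to the sigma-algebra generated by the second projection; it is a
  sigma(X)-measurable random variable, i.e. (a version of) hbar(X).\<close>

definition condX :: "('a \<times> 'b) measure \<Rightarrow> 'b measure \<Rightarrow> ('a \<times> 'b \<Rightarrow> real) \<Rightarrow> ('a \<times> 'b \<Rightarrow> real)" where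
  "condX M Mx h = real_cond_exp M (vimage_algebra (space M) snd Mx) h"

definition sq_int :: "('a \<times> 'b) measure \<Rightarrow> ('a \<times> 'b \<Rightarrow> real) \<Rightarrow> bool" where
  "sq_int M h \<longleftrightarrow> h \<in> borel_measurable M \<and> integrable M (\<lambda>z. (h z)\<^sup>2)"

definition lin_space :: "('c \<Rightarrow> real) set \<Rightarrow> bool" where
  "lin_space S \<longleftrightarrow> (\<lambda>_. 0) \<in> S \<and> (\<forall>f\<in>S. \<forall>g\<in>S. (\<lambda>z. f z + g z) \<in> S)
     \<and> (\<forall>c::real. \<forall>f\<in>S. (\<lambda>z. c * f z) \<in> S)"

definition F_Theta :: "('a \<times> 'b) measure \<Rightarrow> 'b measure \<Rightarrow> ('t \<Rightarrow> 'a \<times> 'b \<Rightarrow> real) \<Rightarrow> 't set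
    \<Rightarrow> ('a \<times> 'b \<Rightarrow> real) set \<Rightarrow> ('a \<times> 'b \<Rightarrow> real) set" where
  "F_Theta M Mx fam Th F = {(\<lambda>z. fam \<theta> z + f z - condX M Mx f z) | \<theta> f. \<theta> \<in> Th \<and> f \<in> F}"

definition msd :: "('a \<times> 'b) measure \<Rightarrow> ('a \<times> 'b \<Rightarrow> real) \<Rightarrow> ('a \<times> 'b \<Rightarrow> real) \<Rightarrow> real" where
  "msd M f g = (\<integral>z. (f z - g z)\<^sup>2 \<partial>M)"

definition set_msd :: "('a \<times> 'b) measure \<Rightarrow> ('a \<times> 'b \<Rightarrow> real) set \<Rightarrow> ('a \<times> 'b \<Rightarrow> real) \<Rightarrow> real" where
  "set_msd M S g = (INF f\<in>S. msd M f g)"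

text \<open>dbar(fbar, gbar) = E_{P_X}[(fbar(X) - gbar(X))^2], written as an expectation
  under P of the sigma(X)-measurable versions condX f = fbar(X), condX g = gbar(X).\<close>
definition dbar :: "('a \<times> 'b) measure \<Rightarrow> 'b measure \<Rightarrow> ('a \<times> 'b \<Rightarrow> real) \<Rightarrow> ('a \<times> 'b \<Rightarrow> real) \<Rightarrow> real" where
  "dbar M Mx f g = (\<integral>z. (condX M Mx f z - condX M Mx g z)\<^sup>2 \<partial>M)"

end

theory Submission
  imports Defs
begin

text \<open>Write \<open>E\<close> for conditional expectation given \<open>X\<close>. For \<open>h = f\<^sub>\<theta> + f - E f\<close> in
  \<open>F\<^sub>\<Theta>\<close> the perturbation \<open>f - E f\<close> is conditionally centred, so \<open>E (h - g) = E f\<^sub>\<theta> - E g\<close>;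
  since \<open>E\<close> is an \<open>L\<^sup>2\<close>-contraction (conditional Jensen), \<open>d(h, g) \<ge> dbar(f\<^sub>\<theta>, g)\<close>.
  Conversely the choice \<open>f = g - f\<^sub>\<theta>\<close> gives \<open>h - g = E f\<^sub>\<theta> - E g\<close>, so for every \<open>\<theta>\<close> the
  bound is attained and both infima agree.\<close>

lemma (in sigma_finite_subalgebra) real_cond_exp_square_integral_le:
  assumes u: "integrable M u" "integrable M (\<lambda>x. (u x)\<^sup>2)"
  shows "(\<integral>x. (real_cond_exp M F u x)\<^sup>2 \<partial>M) \<le> (\<integral>x. (u x)\<^sup>2 \<partial>M)"
proof -
  have jensen: "AE x in M. (real_cond_exp M F u x)\<^sup>2 \<le> real_cond_exp M F (\<lambda>x. (u x)\<^sup>2) x"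
    by (rule real_cond_exp_jensens_inequality(2)[where I=UNIV]) (auto simp: u convex_power2)
  have "integrable M (\<lambda>x. (real_cond_exp M F u x)\<^sup>2)"
    by (rule integrable_convex_cond_exp[where I=UNIV]) (auto simp: u convex_power2)
  then have "(\<integral>x. (real_cond_exp M F u x)\<^sup>2 \<partial>M) \<le> (\<integral>x. real_cond_exp M F (\<lambda>x. (u x)\<^sup>2) x \<partial>M)"
    using jensen u by (intro integral_mono_AE) auto
  also have "\<dots> = (\<integral>x. (u x)\<^sup>2 \<partial>M)"
    using u(2) by (rule real_cond_exp_int(2))
  finally show ?thesis .
qed

lemma (in sigma_finite_subalgebra) real_cond_exp_add_centered:
  assumes "integrable M a" "integrable M f"
  shows "AE x in M. real_cond_exp M F (\<lambda>x. a x + f x - real_cond_exp M F f x) x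
    = real_cond_exp M F a x"
proof -
  have "AE x in M. real_cond_exp M F (\<lambda>x. a x + f x - real_cond_exp M F f x) x
      = real_cond_exp M F (\<lambda>x. a x + f x) x - real_cond_exp M F (real_cond_exp M F f) x"
    using assms by (intro real_cond_exp_diff) auto
  moreover have "AE x in M. real_cond_exp M F (\<lambda>x. a x + f x) x
      = real_cond_exp M F a x + real_cond_exp M F f x"
    using assms by (intro real_cond_exp_add)
  moreover have "AE x in M. real_cond_exp M F (real_cond_exp M F f) x = real_cond_exp M F f x"
    using assms by (intro real_cond_exp_F_meas) auto
  ultimately show ?thesis by eventually_elim simp
qed

lemma (in sigma_finite_subalgebra) real_cond_exp_distance_le_centered_perturbation:
  assumes "integrable M a" "integrable M f" "integrable M g"
    and "integrable M (\<lambda>x. (a x + f x - real_cond_exp M F f x - g x)\<^sup>2)"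
  shows "(\<integral>x. (real_cond_exp M F a x - real_cond_exp M F g x)\<^sup>2 \<partial>M)
    \<le> (\<integral>x. (a x + f x - real_cond_exp M F f x - g x)\<^sup>2 \<partial>M)"
proof -
  let ?u = "\<lambda>x. a x + f x - real_cond_exp M F f x - g x"
  have "AE x in M. real_cond_exp M F ?u x
      = real_cond_exp M F (\<lambda>x. a x + f x - real_cond_exp M F f x) x - real_cond_exp M F g x"
    using assms by (intro real_cond_exp_diff) auto
  with real_cond_exp_add_centered[OF assms(1,2)]
  have "AE x in M. real_cond_exp M F ?u x = real_cond_exp M F a x - real_cond_exp M F g x"
    by eventually_elim simp
  then have "(\<integral>x. (real_cond_exp M F a x - real_cond_exp M F g x)\<^sup>2 \<partial>M)
      = (\<integral>x. (real_cond_exp M F ?u x)\<^sup>2 \<partial>M)"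
    by (intro integral_cong_AE) auto
  also have "\<dots> \<le> (\<integral>x. (?u x)\<^sup>2 \<partial>M)"
    using assms real_cond_exp_int(1)[OF assms(2)] by (intro real_cond_exp_square_integral_le) auto
  finally show ?thesis .
qed

lemma (in sigma_finite_subalgebra) real_cond_exp_distance_attained_by_centered_perturbation:
  assumes "integrable M b" "integrable M g" "a \<in> borel_measurable M" "AE x in M. a x = b x"
  shows "(\<integral>x. (a x + (g x - b x) - real_cond_exp M F (\<lambda>x. g x - b x) x - g x)\<^sup>2 \<partial>M)
    = (\<integral>x. (real_cond_exp M F a x - real_cond_exp M F g x)\<^sup>2 \<partial>M)"
proof (rule integral_cong_AE)
  have "AE x in M. real_cond_exp M F (\<lambda>x. g x - b x) x
      = real_cond_exp M F g x - real_cond_exp M F b x"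
    using assms by (intro real_cond_exp_diff)
  moreover have "AE x in M. real_cond_exp M F b x = real_cond_exp M F a x"
    using assms by (intro real_cond_exp_cong) (auto elim: AE_mp)
  ultimately show "AE x in M. (a x + (g x - b x) - real_cond_exp M F (\<lambda>x. g x - b x) x - g x)\<^sup>2
      = (real_cond_exp M F a x - real_cond_exp M F g x)\<^sup>2"
    using assms(4) by eventually_elim simp
qed (use assms in auto)

lemma subalgebra_vimage_snd:
  assumes "sets M = sets (A \<Otimes>\<^sub>M B)"
  shows "subalgebra M (vimage_algebra (space M) snd B)"
proof -
  have "snd \<in> measurable M B"
    using measurable_cong_sets[OF assms refl] measurable_snd by blast
  then show ?thesis
    unfolding subalgebra_def measurable_iff_sets by auto
qed

lemma lin_space_diff:
  assumes "lin_space S" "f \<in> S" "h \<in> S"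
  shows "(\<lambda>z. f z - h z) \<in> S"
proof -
  have add: "\<And>u v. u \<in> S \<Longrightarrow> v \<in> S \<Longrightarrow> (\<lambda>z. u z + v z) \<in> S"
    and neg: "(\<lambda>z. (-1) * h z) \<in> S"
    using assms unfolding lin_space_def by blast+
  from add[OF assms(2) neg] show ?thesis by simp
qed

locale conditional_mean_model = prob_space M
  for M :: "('a \<times> 'b) measure" and Mx :: "'b measure"
    and fam :: "'t \<Rightarrow> 'a \<times> 'b \<Rightarrow> real" and Th :: "'t set"
    and F :: "('a \<times> 'b \<Rightarrow> real) set" +
  assumes subalgebra_snd: "subalgebra M (vimage_algebra (space M) snd Mx)"
    and sq_int_F: "\<And>f. f \<in> F \<Longrightarrow> sq_int M f"
    and F_Theta_subset: "F_Theta M Mx fam Th F \<subseteq> F"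
    and lin_space_F: "lin_space F"
begin

sublocale X: finite_measure_subalgebra M "vimage_algebra (space M) snd Mx"
  by unfold_locales (rule subalgebra_snd)

lemma F_measurable: "f \<in> F \<Longrightarrow> f \<in> borel_measurable M"
  and F_square_integrable: "f \<in> F \<Longrightarrow> integrable M (\<lambda>z. (f z)\<^sup>2)"
  using sq_int_F unfolding sq_int_def by auto

lemma F_integrable: "f \<in> F \<Longrightarrow> integrable M f"
  using F_measurable F_square_integrable square_integrable_imp_integrable by blast

text \<open>\<open>f\<^sub>\<theta>\<close> itself need not lie in \<open>F\<close>; this element of \<open>F\<^sub>\<Theta>\<close> agrees with it only
  almost everywhere, as \<open>condX M Mx (\<lambda>_. 0)\<close> is just some version of the zero function.\<close>

lemma fam_minus_condX_zero_in_F: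
  assumes "\<theta> \<in> Th"
  shows "(\<lambda>z. fam \<theta> z - condX M Mx (\<lambda>_. 0) z) \<in> F"
proof -
  have "(\<lambda>_. 0) \<in> F" using lin_space_F unfolding lin_space_def by blast
  with assms have "(\<lambda>z. fam \<theta> z + 0 - condX M Mx (\<lambda>_. 0) z) \<in> F_Theta M Mx fam Th F"
    unfolding F_Theta_def by (intro CollectI exI[of _ \<theta>] exI[of _ "\<lambda>_. 0"]) simp
  then show ?thesis using F_Theta_subset by auto
qed

lemma AE_condX_zero: "AE z in M. condX M Mx (\<lambda>_. 0) z = 0"
  unfolding condX_def by (rule X.real_cond_exp_F_meas) auto

lemma integrable_fam:
  assumes "\<theta> \<in> Th"
  shows "integrable M (fam \<theta>)"
proof -
  have "integrable M (\<lambda>z. (fam \<theta> z - condX M Mx (\<lambda>_. 0) z) + condX M Mx (\<lambda>_. 0) z)"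
    using F_integrable[OF fam_minus_condX_zero_in_F[OF assms]] unfolding condX_def
    by (intro Bochner_Integration.integrable_add X.real_cond_exp_int(1)) auto
  then show ?thesis by simp
qed

lemma dbar_le_msd_F_Theta:
  assumes "h \<in> F_Theta M Mx fam Th F" "g \<in> F"
  shows "\<exists>\<theta>\<in>Th. dbar M Mx (fam \<theta>) g \<le> msd M h g"
proof -
  obtain \<theta> f where "\<theta> \<in> Th" "f \<in> F" and h: "h = (\<lambda>z. fam \<theta> z + f z - condX M Mx f z)"
    using assms(1) unfolding F_Theta_def by blast
  have "(\<lambda>z. h z - g z) \<in> F"
    using assms F_Theta_subset by (intro lin_space_diff[OF lin_space_F]) auto
  then have "dbar M Mx (fam \<theta>) g \<le> msd M h g"
    using F_square_integrable F_integrable integrable_fam \<open>\<theta> \<in> Th\<close> \<open>f \<in> F\<close> assms(2)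
    unfolding dbar_def msd_def condX_def h
    by (intro X.real_cond_exp_distance_le_centered_perturbation) auto
  with \<open>\<theta> \<in> Th\<close> show ?thesis by blast
qed

lemma msd_F_Theta_attains_dbar:
  assumes "\<theta> \<in> Th" "g \<in> F"
  shows "\<exists>h\<in>F_Theta M Mx fam Th F. msd M h g = dbar M Mx (fam \<theta>) g"
proof -
  define b where "b = (\<lambda>z. fam \<theta> z - condX M Mx (\<lambda>_. 0) z)"
  define f where "f = (\<lambda>z. g z - b z)"
  have "b \<in> F" unfolding b_def using assms(1) by (rule fam_minus_condX_zero_in_F)
  then have "f \<in> F" unfolding f_def using assms(2) by (intro lin_space_diff[OF lin_space_F])
  then have "(\<lambda>z. fam \<theta> z + f z - condX M Mx f z) \<in> F_Theta M Mx fam Th F"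
    using assms(1) unfolding F_Theta_def by blast
  moreover have "AE z in M. fam \<theta> z = b z"
    using AE_condX_zero unfolding b_def by eventually_elim simp
  then have "msd M (\<lambda>z. fam \<theta> z + f z - condX M Mx f z) g = dbar M Mx (fam \<theta>) g"
    using \<open>b \<in> F\<close> assms F_integrable integrable_fam
    unfolding msd_def dbar_def condX_def f_def
    by (intro X.real_cond_exp_distance_attained_by_centered_perturbation) auto
  ultimately show ?thesis by blast
qed

end

theorem proposition1:
  fixes M :: "('a \<times> 'b) measure" and Myc :: "'a measure" and Mx :: "'b measure"
    and fam :: "'t \<Rightarrow> 'a \<times> 'b \<Rightarrow> real" and Th :: "'t set"
    and F :: "('a \<times> 'b \<Rightarrow> real) set" and g :: "'a \<times> 'b \<Rightarrow> real"
  assumes "prob_space M"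
    and "sets M = sets (Myc \<Otimes>\<^sub>M Mx)"
    and "\<forall>f\<in>F. sq_int M f"
    and "F_Theta M Mx fam Th F \<subseteq> F"
    and "lin_space F"
    and "lin_space (F_Theta M Mx fam Th F)"
    and "g \<in> F"
  shows "set_msd M (F_Theta M Mx fam Th F) g = (INF \<theta>\<in>Th. dbar M Mx (fam \<theta>) g)"
proof -
  interpret conditional_mean_model M Mx fam Th F
    using assms(1-5) subalgebra_vimage_snd[OF assms(2)]
    by (simp add: conditional_mean_model_def conditional_mean_model_axioms_def)
  let ?FT = "F_Theta M Mx fam Th F"
  have "?FT \<noteq> {}" using assms(6) unfolding lin_space_def by blast
  then have "Th \<noteq> {}" unfolding F_Theta_def by blast
  have "bdd_below ((\<lambda>h. msd M h g) ` ?FT)" "bdd_below ((\<lambda>\<theta>. dbar M Mx (fam \<theta>) g) ` Th)"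
    unfolding msd_def dbar_def by (auto intro: bdd_belowI[of _ 0])
  moreover have "\<exists>h\<in>?FT. msd M h g \<le> dbar M Mx (fam \<theta>) g" if "\<theta> \<in> Th" for \<theta>
    using msd_F_Theta_attains_dbar[OF that assms(7)] by (metis order_refl)
  ultimately show ?thesis
    unfolding set_msd_def using \<open>?FT \<noteq> {}\<close> \<open>Th \<noteq> {}\<close> dbar_le_msd_F_Theta assms(7)
    by (intro antisym cINF_mono) auto
qed

end
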